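(* Let $U$ be a complete two-phase quantum walk. Then $U$ is unitary equivalent to \begin{align*} U_{r_+,r_-,\sigma_1,\sigma_2}={}&\sum_{n\ge0}|e_1^{n-1}\rangle\langle r_+e_1^n+s_+e_2^n|+|e_2^{n+1}\rangle\langle -e^{i\sigma_1}s_+e_1^n+e^{i\sigma_1}r_+e_2^n|\\ &+\sum_{n\le-1}|e_1^{n-1}\rangle\langle r_-e_1^n+e^{i\sigma_2}s_-e_2^n|+|e_2^{n+1}\rangle\langle -s_-e_1^n+e^{i\sigma_2}r_-e_2^n| \end{align*} for some $0\le r_+,r_-\le1$ and $\sigma_1,\sigma_2\in\mathbb R$, where $s_\varepsilon=\sqrt{1-r_\varepsilon^2}$ ($\varepsilon=+,-$). Moreover, writing $U_{r,\sigma}=U_{r_+,r_-,\sigma_1,\sigma_2}$, if $0<r_\varepsilon,r'_\varepsilon<1$ and $\sigma_i,\sigma'_i\in[0,2\pi)$, then $U_{r,\sigma}$ and $U_{r',\sigma'}$ are unitary equivalent if and only if $r=r'$ and $\sigma=\sigma'$.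
   Context: Let $\mathcal H_n=\mathbb C^2$ for $n\in\mathbb Z$, $\mathcal H=\bigoplus_{n\in\mathbb Z}\mathcal H_n$, $P_n$ the orthogonal projection onto $\mathcal H_n$, and $\{e_1^n,e_2^n\}$ the standard basis of $\mathcal H_n$; each $\mathcal H_n$ is identified with $\mathbb C^2$. Dirac notation: $|x\rangle\langle y|$ is the operator $z\mapsto\langle y,z\rangle x$ (inner product conjugate-linear in the first argument). A one-dimensional quantum walk is a unitary $U$ on $\mathcal H$ with $\operatorname{rank}(P_nUP_m)=1$ if $m=n\pm1$ and $0$ otherwise. Every such $U$ can be written as $U=\sum_{n\in\mathbb Z}|\xi_{n-1,n}\rangle\langle\zeta_{n-1,n}|+|\xi_{n+1,n}\rangle\langle\zeta_{n+1,n}|$, where $\{\xi_{n,n+1},\xi_{n+1,n}\}_{n}$ and $\{\zeta_{n,n+1},\zeta_{n+1,n}\}_{n}$ are orthonormal bases of $\mathcal H$ with $\xi_{n,n+1},\zeta_{n+1,n}\in\mathcal H_n$ and $\xi_{n+1,n},\zeta_{n,n+1}\in\mathcal H_{n+1}$. $U$ is a complete two-phase quantum walk if it has such a representation for which there exist $\xi_1^\pm,\xi_2^\pm,\zeta_1^\pm,\zeta_2^\pm\in\mathbb C^2$ with $\xi_{n,n+1}=\xi_1^+$, $\xi_{n,n-1}=\xi_2^+$, $\zeta_{n-1,n}=\zeta_1^+$, $\zeta_{n+1,n}=\zeta_2^+$ for all $n\ge0$, and $\xi_{n,n+1}=\xi_1^-$, $\xi_{n,n-1}=\xi_2^-$,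 $\zeta_{n-1,n}=\zeta_1^-$, $\zeta_{n+1,n}=\zeta_2^-$ for all $n\le-1$. Since $U$ and $e^{i\lambda}U$ are identified, unitaries $U_1,U_2$ on $\mathcal H$ are called unitary equivalent if there exist $\lambda\in\mathbb R$ and a unitary $W=\bigoplus_nW_n$ ($W_n$ unitary on $\mathcal H_n$) with $e^{i\lambda}WU_1W^*=U_2$. *)

theory Defs
  imports "HOL-Analysis.Analysis"
begin

(* H = direct sum over n in Z of H_n = C^2.  A (row/column-finite) operator on H is
   represented by its block matrix: U n m = P_n U P_m viewed as a 2x2 complex matrix
   w.r.t. the standard bases {e_1^n, e_2^n}, {e_1^m, e_2^m}. *)
type_synonym blockop = "int \<Rightarrow> int \<Rightarrow> complex^2^2"

definition vec2 :: "complex \<Rightarrow> complex \<Rightarrow> complex^2" where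
  "vec2 a b = vector [a, b]"

definition e1 :: "complex^2" where "e1 = vec2 1 0"
definition e2 :: "complex^2" where "e2 = vec2 0 1"

definition cinner :: "complex^2 \<Rightarrow> complex^2 \<Rightarrow> complex" where
  "cinner x y = (\<Sum>i\<in>UNIV. cnj (x$i) * y$i)"

(* |x><y| :  z \<mapsto> <y,z> x *)
definition ketbra :: "complex^2 \<Rightarrow> complex^2 \<Rightarrow> complex^2^2" where
  "ketbra x y = (\<chi> i j. x$i * cnj (y$j))"

definition cadj :: "complex^2^2 \<Rightarrow> complex^2^2" where
  "cadj A = (\<chi> i j. cnj (A$j$i))"

definition csmult :: "complex \<Rightarrow> complex^2^2 \<Rightarrow> complex^2^2" where
  "csmult c A = (\<chi> i j. c * A$i$j)"

definition unitary2 :: "complex^2^2 \<Rightarrow> bool" where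
  "unitary2 A \<longleftrightarrow> A ** cadj A = mat 1 \<and> cadj A ** A = mat 1"

definition orthonormal_pair :: "complex^2 \<Rightarrow> complex^2 \<Rightarrow> bool" where
  "orthonormal_pair x y \<longleftrightarrow> cinner x x = 1 \<and> cinner y y = 1 \<and> cinner x y = 0"

definition row_col_finite :: "blockop \<Rightarrow> bool" where
  "row_col_finite U \<longleftrightarrow> (\<forall>n. finite {m. U n m \<noteq> 0} \<and> finite {m. U m n \<noteq> 0})"

definition bmult :: "blockop \<Rightarrow> blockop \<Rightarrow> blockop" where
  "bmult A B n m = (\<Sum>k\<in>{k. A n k \<noteq> 0}. A n k ** B k m)"

definition badj :: "blockop \<Rightarrow> blockop" where
  "badj U n m = cadj (U m n)"

definition bid :: blockop where
  "bid n m = (if n = m then mat 1 else 0)"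

definition bunitary :: "blockop \<Rightarrow> bool" where
  "bunitary U \<longleftrightarrow> row_col_finite U \<and> bmult (badj U) U = bid \<and> bmult U (badj U) = bid"

definition qwalk :: "blockop \<Rightarrow> bool" where
  "qwalk U \<longleftrightarrow> bunitary U \<and>
     (\<forall>n m. rank (U n m) = (if m = n + 1 \<or> m = n - 1 then 1 else 0))"

(* U = sum_n |xi_{n-1,n}><zeta_{n-1,n}| + |xi_{n+1,n}><zeta_{n+1,n}|, with
   xi_{a,b} \<in> H_a, zeta_{a,b} \<in> H_b; {xi} and {zeta} orthonormal bases of H, i.e.
   {xi_{n,n+1}, xi_{n,n-1}} and {zeta_{n+1,n}, zeta_{n-1,n}} are ONBs of H_n = C^2. *)
definition walk_rep :: "blockop \<Rightarrow> (int \<Rightarrow> int \<Rightarrow> complex^2) \<Rightarrow> (int \<Rightarrow> int \<Rightarrow> complex^2) \<Rightarrow> bool" where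
  "walk_rep U \<xi> \<zeta> \<longleftrightarrow>
     (\<forall>n. orthonormal_pair (\<xi> n (n + 1)) (\<xi> n (n - 1))) \<and>
     (\<forall>n. orthonormal_pair (\<zeta> (n + 1) n) (\<zeta> (n - 1) n)) \<and>
     (\<forall>a b. U a b = (if a = b - 1 \<or> a = b + 1 then ketbra (\<xi> a b) (\<zeta> a b) else 0))"

definition complete_two_phase :: "blockop \<Rightarrow> bool" where
  "complete_two_phase U \<longleftrightarrow> qwalk U \<and>
     (\<exists>\<xi> \<zeta> \<xi>1p \<xi>2p \<zeta>1p \<zeta>2p \<xi>1m \<xi>2m \<zeta>1m \<zeta>2m. walk_rep U \<xi> \<zeta> \<and>
        (\<forall>n::int. n \<ge> 0 \<longrightarrow> \<xi> n (n + 1) = \<xi>1p \<and> \<xi> n (n - 1) = \<xi>2p \<and>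
                                \<zeta> (n - 1) n = \<zeta>1p \<and> \<zeta> (n + 1) n = \<zeta>2p) \<and>
        (\<forall>n::int. n \<le> -1 \<longrightarrow> \<xi> n (n + 1) = \<xi>1m \<and> \<xi> n (n - 1) = \<xi>2m \<and>
                                \<zeta> (n - 1) n = \<zeta>1m \<and> \<zeta> (n + 1) n = \<zeta>2m))"

definition unit_equiv :: "blockop \<Rightarrow> blockop \<Rightarrow> bool" where
  "unit_equiv U1 U2 \<longleftrightarrow> (\<exists>(lam::real) (W :: int \<Rightarrow> complex^2^2).
      (\<forall>n. unitary2 (W n)) \<and>
      (\<forall>n m. csmult (cis lam) (W n ** U1 n m ** cadj (W m)) = U2 n m))"

definition Uwalk :: "real \<Rightarrow> real \<Rightarrow> real \<Rightarrow> real \<Rightarrow> blockop" where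
  "Uwalk rp rm \<sigma>1 \<sigma>2 a n =
     (let sp = complex_of_real (sqrt (1 - rp\<^sup>2)); sm = complex_of_real (sqrt (1 - rm\<^sup>2));
          rp' = complex_of_real rp; rm' = complex_of_real rm in
      if a = n - 1 then
        (if n \<ge> 0 then ketbra e1 (vec2 rp' sp)
         else ketbra e1 (vec2 rm' (cis \<sigma>2 * sm)))
      else if a = n + 1 then
        (if n \<ge> 0 then ketbra e2 (vec2 (- cis \<sigma>1 * sp) (cis \<sigma>1 * rp'))
         else ketbra e2 (vec2 (- sm) (cis \<sigma>2 * rm')))
      else 0)"

end

theory Submission
  imports Defs "HOL-Library.Real_Mod"
begin

(* Both U and U_{r,\<sigma>} are of the form \<Sum>_n |\<xi>_{n-1,n}><\<zeta>_{n-1,n}| + |\<xi>_{n+1,n}><\<zeta>_{n+1,n}|.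
   Conjugating by W = \<oplus> W_n, where W_n maps \<xi>_{n,n+1}, \<xi>_{n,n-1} to \<alpha>_n e_1, \<beta>_n e_2, gives a walk
   of the same form whose \<xi>'s are e_1, e_2; its \<zeta>'s are read off from the 2x2 coin of inner
   products between \<xi>_{n,n\<plusminus>1} and \<zeta>_{n\<plusminus>1,n} at each site.  Writing the coin entries as u r and v s with
   |u| = |v| = 1 and r, s \<ge> 0, the recursion \<alpha>_n = c u_n^* \<alpha>_{n-1}, \<beta>_n = c v_0^* \<alpha>_{n-1} makes r and s
   appear as real entries and leaves one phase on each half-line; choosing the global phase c as
   a square root of the mismatch between the two half-lines turns these phases into e^{i\<sigma>_1}, e^{i\<sigma>_2}.
   Conversely, a unitary equivalence between two walks in this normal form has to preserve the
   lines C e_1 and C e_2 at every site, so it is diagonal, and comparing the entries next to the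
   origin forces c^2 = 1 and then equality of all four parameters. *)

section \<open>Two-dimensional linear algebra\<close>

lemma vec2_nth [simp]: "vec2 a b $ 1 = a" "vec2 a b $ 2 = b"
  by (simp_all add: vec2_def)

lemma vec2_eq_iff [simp]: "vec2 a b = vec2 c d \<longleftrightarrow> a = c \<and> b = d"
  by (metis vec2_nth)

lemma vec2_components: "v = vec2 (v $ 1) (v $ 2)"
  by (simp add: vec_eq_iff forall_2)

lemma vec2_eq_0_iff: "vec2 a b = 0 \<longleftrightarrow> a = 0 \<and> b = 0"
  by (metis vec2_nth zero_index vec2_components)

lemma vector_scalar_mult_vec2: "k *s vec2 a b = vec2 (k * a) (k * b)"
  by (simp add: vec_eq_iff forall_2)

lemma e1_e2_vec2: "e1 = vec2 1 0" "e2 = vec2 0 1"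
  by (simp_all add: e1_def e2_def)

lemma cinner_expand: "cinner x y = cnj (x $ 1) * y $ 1 + cnj (x $ 2) * y $ 2"
  by (simp add: cinner_def sum_2)

lemma cinner_commute: "cinner y x = cnj (cinner x y)"
  by (simp add: cinner_expand mult.commute)

lemma ketbra_nth [simp]: "ketbra x y $ i $ j = x $ i * cnj (y $ j)"
  by (simp add: ketbra_def)

lemma cadj_nth [simp]: "cadj A $ i $ j = cnj (A $ j $ i)"
  by (simp add: cadj_def)

lemma csmult_nth [simp]: "csmult c A $ i $ j = c * A $ i $ j"
  by (simp add: csmult_def)

lemma matrix_mult_nth2: "((A :: complex^2^2) ** B) $ i $ j = A$i$1 * B$1$j + A$i$2 * B$2$j"
  by (simp add: matrix_matrix_mult_def sum_2)

lemma matrix_vector_mult_nth2: "((A :: complex^2^2) *v x) $ i = A$i$1 * x$1 + A$i$2 * x$2"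
  by (simp add: matrix_vector_mult_def sum_2)

lemma matrix_eq_iff2:
  "(A :: complex^2^2) = B \<longleftrightarrow> A$1$1 = B$1$1 \<and> A$1$2 = B$1$2 \<and> A$2$1 = B$2$1 \<and> A$2$2 = B$2$2"
  by (auto simp: vec_eq_iff forall_2)

lemma ketbra_conj: "(W :: complex^2^2) ** ketbra x y ** cadj V = ketbra (W *v x) (V *v y)"
  by (simp add: matrix_eq_iff2 matrix_mult_nth2 matrix_vector_mult_nth2 algebra_simps)

lemma csmult_ketbra: "csmult c (ketbra x y) = ketbra (c *s x) y"
  by (simp add: matrix_eq_iff2 algebra_simps)

lemma ketbra_scale_left: "ketbra (a *s x) y = ketbra x (cnj a *s y)"
  by (simp add: matrix_eq_iff2 algebra_simps)

lemma csmult_zero_right [simp]: "csmult c 0 = 0"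
  by (simp add: matrix_eq_iff2)

lemma ketbra_cancel_left:
  assumes "x \<noteq> 0"
  shows "ketbra x y = ketbra x z \<longleftrightarrow> y = z"
proof
  assume eq: "ketbra x y = ketbra x z"
  obtain i where "x $ i \<noteq> 0" using assms by (metis vec_eq_iff zero_index)
  then have "cnj (y $ j) = cnj (z $ j)" for j
    using arg_cong[OF eq, of "\<lambda>A. A $ i $ j"] by simp
  then show "y = z" by (simp add: vec_eq_iff)
qed simp

lemma ketbra_eq_ketbra_e1:
  assumes "ketbra x y = ketbra e1 z" "z \<noteq> 0"
  shows "x $ 2 = 0"
proof -
  obtain j where "z $ j \<noteq> 0" using assms(2) by (metis vec_eq_iff zero_index)
  then have "y $ j \<noteq> 0" using arg_cong[OF assms(1), of "\<lambda>A. A $ 1 $ j"] by (auto simp: e1_e2_vec2)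
  then show ?thesis using arg_cong[OF assms(1), of "\<lambda>A. A $ 2 $ j"] by (simp add: e1_e2_vec2)
qed

lemma ketbra_eq_ketbra_e2:
  assumes "ketbra x y = ketbra e2 z" "z \<noteq> 0"
  shows "x $ 1 = 0"
proof -
  obtain j where "z $ j \<noteq> 0" using assms(2) by (metis vec_eq_iff zero_index)
  then have "y $ j \<noteq> 0" using arg_cong[OF assms(1), of "\<lambda>A. A $ 2 $ j"] by (auto simp: e1_e2_vec2)
  then show ?thesis using arg_cong[OF assms(1), of "\<lambda>A. A $ 1 $ j"] by (simp add: e1_e2_vec2)
qed

lemma cnj_mult_self_eq_1_iff: "cnj z * z = 1 \<longleftrightarrow> cmod z = 1"
proof -
  have "cnj z * z = of_real ((cmod z)\<^sup>2)" by (metis complex_norm_square mult.commute)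
  then have "cnj z * z = 1 \<longleftrightarrow> (cmod z)\<^sup>2 = 1" by (metis of_real_eq_1_iff)
  also have "\<dots> \<longleftrightarrow> cmod z = 1" by (smt (verit) norm_ge_zero power2_eq_1_iff)
  finally show ?thesis .
qed

lemma orthonormal_pair_commute: "orthonormal_pair x y \<Longrightarrow> orthonormal_pair y x"
  unfolding orthonormal_pair_def using cinner_commute[of x y] by simp

lemma unitary2_diagonal:
  assumes "unitary2 W" "W $ 1 $ 2 = 0" "W $ 2 $ 1 = 0"
  shows "W *v v = vec2 (W $ 1 $ 1 * v $ 1) (W $ 2 $ 2 * v $ 2)"
    and "cmod (W $ 1 $ 1) = 1" "cmod (W $ 2 $ 2) = 1"
proof -
  show "W *v v = vec2 (W $ 1 $ 1 * v $ 1) (W $ 2 $ 2 * v $ 2)"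
    using assms(2,3) by (simp add: vec_eq_iff forall_2 matrix_vector_mult_nth2)
  have "cadj W ** W = mat 1" using assms(1) unfolding unitary2_def by blast
  then have "cnj (W $ i $ i) * W $ i $ i = 1" if "i = 1 \<or> i = 2" for i
    using that assms(2,3) by (auto simp: matrix_eq_iff2 matrix_mult_nth2 mat_def)
  then show "cmod (W $ 1 $ 1) = 1" "cmod (W $ 2 $ 2) = 1"
    by (simp_all add: cnj_mult_self_eq_1_iff)
qed

definition frame_map :: "complex \<Rightarrow> complex \<Rightarrow> complex^2 \<Rightarrow> complex^2 \<Rightarrow> complex^2^2" where
  "frame_map a b x y = (\<chi> i j. if i = 1 then a * cnj (x $ j) else b * cnj (y $ j))"

lemma frame_map_mult_vec: "frame_map a b x y *v v = vec2 (a * cinner x v) (b * cinner y v)"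
  by (simp add: frame_map_def vec_eq_iff forall_2 matrix_vector_mult_nth2 cinner_expand algebra_simps)

lemma frame_map_unitary:
  assumes "orthonormal_pair x y" "cmod a = 1" "cmod b = 1"
  shows "unitary2 (frame_map a b x y)"
proof -
  have "cnj a * a = 1" "cnj b * b = 1"
    using assms(2,3) by (simp_all add: cnj_mult_self_eq_1_iff)
  moreover have "cinner x x = 1" "cinner y y = 1" "cinner x y = 0" "cinner y x = 0"
    using assms(1) cinner_commute[of x y] unfolding orthonormal_pair_def by auto
  moreover have "(frame_map a b x y ** cadj (frame_map a b x y)) $ 1 $ 1 = a * cnj a * cinner x x"
    "(frame_map a b x y ** cadj (frame_map a b x y)) $ 1 $ 2 = a * cnj b * cinner x y"
    "(frame_map a b x y ** cadj (frame_map a b x y)) $ 2 $ 1 = b * cnj a * cinner y x"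
    "(frame_map a b x y ** cadj (frame_map a b x y)) $ 2 $ 2 = b * cnj b * cinner y y"
    by (simp_all add: frame_map_def matrix_mult_nth2 cinner_expand algebra_simps)
  ultimately have "frame_map a b x y ** cadj (frame_map a b x y) = mat 1"
    by (simp add: matrix_eq_iff2 mat_def mult.commute)
  then show ?thesis unfolding unitary2_def using matrix_left_right_inverse by blast
qed

lemma orthonormal_pair_complement:
  assumes "orthonormal_pair x y"
  obtains k where "cmod k = 1" "y = vec2 (- k * cnj (x $ 2)) (k * cnj (x $ 1))"
proof -
  obtain x1 x2 y1 y2 where xy: "x = vec2 x1 x2" "y = vec2 y1 y2" by (meson vec2_components)
  have h: "cnj x1 * x1 + cnj x2 * x2 = 1" "cnj y1 * y1 + cnj y2 * y2 = 1"
    "cnj x1 * y1 + cnj x2 * y2 = 0"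
    using assms unfolding orthonormal_pair_def cinner_expand xy by simp_all
  have h': "x1 * cnj y1 + x2 * cnj y2 = 0" using arg_cong[OF h(3), of cnj] by simp
  define k where "k = x1 * y2 - x2 * y1"
  have "y1 = - k * cnj x2" "y2 = k * cnj x1" unfolding k_def using h h' by algebra+
  moreover have "cnj k * k = 1" unfolding k_def using h h' by (simp add: algebra_simps) algebra
  then have "cmod k = 1" by (simp add: cnj_mult_self_eq_1_iff)
  ultimately show ?thesis using that xy by simp
qed

lemma orthonormal_pair_coin:
  assumes "orthonormal_pair x1 x2" "orthonormal_pair z1 z2"
  obtains d where "cmod d = 1" "cinner x1 z2 = - d * cnj (cinner x2 z1)"
    "cinner x2 z2 = d * cnj (cinner x1 z1)"
    and "(cmod (cinner x1 z1))\<^sup>2 + (cmod (cinner x2 z1))\<^sup>2 = 1"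
proof -
  obtain k where k: "cmod k = 1" "x2 = vec2 (- k * cnj (x1 $ 2)) (k * cnj (x1 $ 1))"
    using orthonormal_pair_complement[OF assms(1)] .
  obtain l where l: "cmod l = 1" "z2 = vec2 (- l * cnj (z1 $ 2)) (l * cnj (z1 $ 1))"
    using orthonormal_pair_complement[OF assms(2)] .
  obtain a1 a2 b1 b2 where ab: "x1 = vec2 a1 a2" "z1 = vec2 b1 b2" by (meson vec2_components)
  have h: "cnj a1 * a1 + cnj a2 * a2 = 1" "cnj b1 * b1 + cnj b2 * b2 = 1"
    using assms unfolding orthonormal_pair_def cinner_expand ab by simp_all
  have kk: "cnj k * k = 1" using k(1) by (simp add: cnj_mult_self_eq_1_iff)
  have "complex_of_real ((cmod (cinner x1 z1))\<^sup>2 + (cmod (cinner x2 z1))\<^sup>2) = 1"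
    unfolding of_real_add complex_norm_square k(2) ab cinner_expand
    using h kk by (simp add: algebra_simps) algebra
  then have "(cmod (cinner x1 z1))\<^sup>2 + (cmod (cinner x2 z1))\<^sup>2 = 1"
    by (metis of_real_eq_1_iff)
  moreover have "cinner x1 z2 = - (l * cnj k) * cnj (cinner x2 z1)"
    "cinner x2 z2 = (l * cnj k) * cnj (cinner x1 z1)"
    unfolding k(2) l(2) ab cinner_expand using kk by (simp_all add: algebra_simps) algebra+
  moreover have "cmod (l * cnj k) = 1" using k l by (simp add: norm_mult)
  ultimately show ?thesis using that by blast
qed

lemma cis_Arg_mult_cmod: "z = cis (Arg z) * of_real (cmod z)"
  by (metis rcis_cmod_Arg rcis_def mult.commute)

lemma orthonormal_pair_coin_polar:
  assumes "orthonormal_pair x1 x2" "orthonormal_pair z1 z2"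
  obtains u v d :: complex and r :: real where
    "cmod u = 1" "cmod v = 1" "cmod d = 1" "0 \<le> r" "r \<le> 1"
    "cinner x1 z1 = u * of_real r" "cinner x2 z1 = v * of_real (sqrt (1 - r\<^sup>2))"
    "cinner x1 z2 = - d * cnj (v * of_real (sqrt (1 - r\<^sup>2)))"
    "cinner x2 z2 = d * cnj (u * of_real r)"
proof -
  obtain d where d: "cmod d = 1" "cinner x1 z2 = - d * cnj (cinner x2 z1)"
    "cinner x2 z2 = d * cnj (cinner x1 z1)"
    and norms: "(cmod (cinner x1 z1))\<^sup>2 + (cmod (cinner x2 z1))\<^sup>2 = 1"
    using orthonormal_pair_coin[OF assms] .
  define r where "r = cmod (cinner x1 z1)"
  have "1 - r\<^sup>2 = (cmod (cinner x2 z1))\<^sup>2" using norms unfolding r_def by simp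
  then have "sqrt (1 - r\<^sup>2) = cmod (cinner x2 z1)" by simp
  moreover have "r\<^sup>2 \<le> 1"
    using norms zero_le_power2[of "cmod (cinner x2 z1)"] unfolding r_def by linarith
  then have "r \<le> 1" unfolding r_def by (simp add: abs_square_le_1)
  ultimately show ?thesis
    using that[of "cis (Arg (cinner x1 z1))" "cis (Arg (cinner x2 z1))" d r] d
    by (simp add: r_def flip: cis_Arg_mult_cmod)
qed

lemma cis_Arg_unimodular:
  assumes "cmod z = 1"
  shows "cis (Arg z) = z"
proof -
  have "z \<noteq> 0" using assms by auto
  then show ?thesis using assms by (simp add: cis_Arg sgn_eq)
qed

lemma cis_inj_on_period:
  assumes "cis a = cis b" "a \<in> {0..<2*pi}" "b \<in> {0..<2*pi}"
  shows "a = b"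
  using assms by (simp add: cis_eq_iff rcong_def)

lemma exists_sequence_with_ratios:
  fixes g :: "int \<Rightarrow> 'a :: real_normed_field"
  assumes "\<And>m. norm (g m) = 1"
  obtains \<alpha> where "\<And>m. norm (\<alpha> m) = 1" "\<And>m. \<alpha> m = g m * \<alpha> (m - 1)"
proof
  define \<alpha> where "\<alpha> m = (if 0 \<le> m then \<Prod>k<Suc (nat m). g (int k)
                         else \<Prod>k<nat (- m - 1). inverse (g (- int k - 1)))" for m
  show "norm (\<alpha> m) = 1" for m
    by (simp add: \<alpha>_def assms norm_inverse norm_mult flip: prod_norm)
  show "\<alpha> m = g m * \<alpha> (m - 1)" for m
  proof (cases "0 < m")
    case True
    then have "Suc (nat (m - 1)) = nat m" by simp
    then show ?thesis using True by (simp add: \<alpha>_def flip: \<open>Suc (nat (m - 1)) = nat m\<close>)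
  next
    case False
    have "g m \<noteq> 0" using assms[of m] by auto
    show ?thesis
    proof (cases "m = 0")
      case False
      then have "nat (- m) = Suc (nat (- m - 1))" "- int (nat (- m - 1)) - 1 = m"
        using \<open>\<not> 0 < m\<close> by simp_all
      then show ?thesis using \<open>\<not> 0 < m\<close> False \<open>g m \<noteq> 0\<close> by (simp add: \<alpha>_def)
    qed (simp add: \<alpha>_def)
  qed
qed

text \<open>One step of the gauge recursion at a site whose coin has entries \<open>u r\<close>, \<open>v' s\<close>,
  \<open>-d (v' s)\<^sup>*\<close>, \<open>d (u r)\<^sup>*\<close>; here \<open>a, a', b, b'\<close> stand for \<open>\<alpha>_{n-1}, \<alpha>_n, \<beta>_n, \<beta>_{n+1}\<close>.\<close>

lemma gauge_site_identities:
  fixes c u v v' d a a' b b' :: complex and r s :: real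
  assumes "cmod c = 1" "cmod u = 1" "cmod v = 1" "cmod v' = 1" "cmod d = 1" "cmod a = 1"
    and "a' = c * cnj u * a" "b = c * cnj v * a" "b' = c * cnj v * a'"
  shows "cnj (c * a) * (a' * (u * r)) = r"
    and "cnj (c * a) * (b * (v' * s)) = cnj v * v' * s"
    and "cnj (c * b') * (a' * (- d * cnj (v' * s))) = - (cnj (c * c) * d * v * cnj v') * s"
    and "cnj (c * b') * (b * (d * cnj (u * r))) = cnj (c * c) * d * r"
proof -
  have units: "cnj c * c = 1" "cnj u * u = 1" "cnj v * v = 1" "cnj a * a = 1"
    using assms(1-6) by (simp_all add: cnj_mult_self_eq_1_iff)
  show "cnj (c * a) * (a' * (u * r)) = r" "cnj (c * a) * (b * (v' * s)) = cnj v * v' * s"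
    "cnj (c * b') * (a' * (- d * cnj (v' * s))) = - (cnj (c * c) * d * v * cnj v') * s"
    "cnj (c * b') * (b * (d * cnj (u * r))) = cnj (c * c) * d * r"
    unfolding assms(7-9) complex_cnj_mult complex_cnj_minus complex_cnj_cnj complex_cnj_complex_of_real
    using units by algebra+
qed

lemma unit_scaling_of_pos_real:
  fixes x y :: complex
  assumes "cmod x = 1" "cmod y = 1" "of_real r' = cnj x * (y * of_real r)" "0 < r" "0 < r'"
  shows "r = r' \<and> y = x"
proof -
  have "cmod (of_real r') = cmod (of_real r)"
    using assms(1,2,3) by (simp add: norm_mult)
  then have "r = r'" using assms(4,5) by simp
  with assms(3) have "(cnj x * y - 1) * of_real r = 0" by (simp add: algebra_simps)
  then have "cnj x * y = 1" using assms(4) by simp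
  moreover have "cnj x * x = 1" using assms(1) by (simp add: cnj_mult_self_eq_1_iff)
  ultimately have "y = x" by algebra
  then show ?thesis using \<open>r = r'\<close> by simp
qed

section \<open>Walks given by their vectors\<close>

definition two_phase :: "'a \<Rightarrow> 'a \<Rightarrow> int \<Rightarrow> 'a" where
  "two_phase p q n = (if 0 \<le> n then p else q)"

text \<open>\<open>walk_of Xl Xr Zl Zr = \<Sum>\<^sub>n |Xl (n - 1)\<rangle>\<langle>Zl n| + |Xr (n + 1)\<rangle>\<langle>Zr n|\<close>; in the notation of
  the paper \<open>Xl n = \<xi>_{n,n+1}\<close>, \<open>Xr n = \<xi>_{n,n-1}\<close>, \<open>Zl n = \<zeta>_{n-1,n}\<close> and \<open>Zr n = \<zeta>_{n+1,n}\<close>.\<close>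

definition walk_of ::
    "(int \<Rightarrow> complex^2) \<Rightarrow> (int \<Rightarrow> complex^2) \<Rightarrow> (int \<Rightarrow> complex^2) \<Rightarrow> (int \<Rightarrow> complex^2) \<Rightarrow> blockop"
  where "walk_of Xl Xr Zl Zr n m =
    (if n = m - 1 then ketbra (Xl n) (Zl m) else if n = m + 1 then ketbra (Xr n) (Zr m) else 0)"

lemma walk_rep_walk_of:
  assumes "walk_rep U \<xi> \<zeta>"
  shows "U = walk_of (\<lambda>n. \<xi> n (n + 1)) (\<lambda>n. \<xi> n (n - 1)) (\<lambda>m. \<zeta> (m - 1) m) (\<lambda>m. \<zeta> (m + 1) m)"
  using assms by (auto simp: walk_rep_def walk_of_def fun_eq_iff)

lemma complete_two_phase_walk_of:
  assumes "complete_two_phase U"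
  obtains x1p x2p z1p z2p x1m x2m z1m z2m where
    "orthonormal_pair x1p x2p" "orthonormal_pair z1p z2p"
    "orthonormal_pair x1m x2m" "orthonormal_pair z1m z2m"
    "U = walk_of (two_phase x1p x1m) (two_phase x2p x2m) (two_phase z1p z1m) (two_phase z2p z2m)"
proof -
  obtain \<xi> \<zeta> x1p x2p z1p z2p x1m x2m z1m z2m where rep: "walk_rep U \<xi> \<zeta>" and
    P: "\<forall>n::int. n \<ge> 0 \<longrightarrow> \<xi> n (n + 1) = x1p \<and> \<xi> n (n - 1) = x2p \<and> \<zeta> (n - 1) n = z1p \<and> \<zeta> (n + 1) n = z2p" and
    M: "\<forall>n::int. n \<le> -1 \<longrightarrow> \<xi> n (n + 1) = x1m \<and> \<xi> n (n - 1) = x2m \<and> \<zeta> (n - 1) n = z1m \<and> \<zeta> (n + 1) n = z2m"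
    using assms unfolding complete_two_phase_def by blast
  have onb: "orthonormal_pair (\<xi> n (n + 1)) (\<xi> n (n - 1))" "orthonormal_pair (\<zeta> (n - 1) n) (\<zeta> (n + 1) n)" for n
    using rep orthonormal_pair_commute unfolding walk_rep_def by blast+
  have phases: "(\<lambda>n. \<xi> n (n + 1)) = two_phase x1p x1m" "(\<lambda>n. \<xi> n (n - 1)) = two_phase x2p x2m"
    "(\<lambda>m. \<zeta> (m - 1) m) = two_phase z1p z1m" "(\<lambda>m. \<zeta> (m + 1) m) = two_phase z2p z2m"
    using P M by (auto simp: two_phase_def fun_eq_iff)
  show ?thesis
  proof (rule that)
    show "orthonormal_pair x1p x2p" "orthonormal_pair z1p z2p" using onb[of 0] P by auto
    show "orthonormal_pair x1m x2m" "orthonormal_pair z1m z2m" using onb[of "-1"] M by auto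
    show "U = walk_of (two_phase x1p x1m) (two_phase x2p x2m) (two_phase z1p z1m) (two_phase z2p z2m)"
      using walk_rep_walk_of[OF rep] unfolding phases .
  qed
qed

lemma Uwalk_walk_of:
  "Uwalk rp rm \<sigma>1 \<sigma>2 = walk_of (\<lambda>_. e1) (\<lambda>_. e2)
     (two_phase (vec2 (of_real rp) (of_real (sqrt (1 - rp\<^sup>2))))
                (vec2 (of_real rm) (cis \<sigma>2 * of_real (sqrt (1 - rm\<^sup>2)))))
     (two_phase (vec2 (- cis \<sigma>1 * of_real (sqrt (1 - rp\<^sup>2))) (cis \<sigma>1 * of_real rp))
                (vec2 (- of_real (sqrt (1 - rm\<^sup>2))) (cis \<sigma>2 * of_real rm)))"
  by (auto simp: Uwalk_def walk_of_def two_phase_def fun_eq_iff Let_def)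

lemma walk_of_conj:
  "csmult c (W n ** walk_of Xl Xr Zl Zr n m ** cadj (W m))
     = walk_of (\<lambda>k. c *s (W k *v Xl k)) (\<lambda>k. c *s (W k *v Xr k))
               (\<lambda>k. W k *v Zl k) (\<lambda>k. W k *v Zr k) n m"
  by (simp add: walk_of_def ketbra_conj csmult_ketbra)

lemma walk_of_scale:
  "walk_of (\<lambda>k. a k *s Xl k) (\<lambda>k. b k *s Xr k) Zl Zr
     = walk_of Xl Xr (\<lambda>m. cnj (a (m - 1)) *s Zl m) (\<lambda>m. cnj (b (m + 1)) *s Zr m)"
  by (auto simp: walk_of_def fun_eq_iff ketbra_scale_left)

lemma walk_of_e1_e2_eq_iff:
  "walk_of (\<lambda>_. e1) (\<lambda>_. e2) Zl Zr = walk_of (\<lambda>_. e1) (\<lambda>_. e2) Zl' Zr'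
     \<longleftrightarrow> Zl = Zl' \<and> Zr = Zr'"
proof
  assume eq: "walk_of (\<lambda>_. e1) (\<lambda>_. e2) Zl Zr = walk_of (\<lambda>_. e1) (\<lambda>_. e2) Zl' Zr'"
  have "e1 \<noteq> 0" "e2 \<noteq> 0" by (simp_all add: e1_e2_vec2 vec2_eq_0_iff)
  moreover have "ketbra e1 (Zl m) = ketbra e1 (Zl' m)" "ketbra e2 (Zr m) = ketbra e2 (Zr' m)" for m
    using fun_cong[OF fun_cong[OF eq, of "m - 1"], of m] fun_cong[OF fun_cong[OF eq, of "m + 1"], of m]
    by (simp_all add: walk_of_def)
  ultimately show "Zl = Zl' \<and> Zr = Zr'" by (simp add: fun_eq_iff ketbra_cancel_left)
qed simp

lemma unit_equiv_refl: "unit_equiv U U"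
  unfolding unit_equiv_def
proof (intro exI[of _ 0] exI[of _ "\<lambda>_. mat 1"] conjI allI)
  show "unitary2 (mat 1)"
    by (simp add: unitary2_def matrix_eq_iff2 matrix_mult_nth2 mat_def)
  show "csmult (cis 0) (mat 1 ** U n m ** cadj (mat 1)) = U n m" for n m
    by (simp add: matrix_eq_iff2 matrix_mult_nth2 mat_def)
qed

section \<open>Normal form\<close>

lemma unit_equiv_walk_of_frame_maps:
  assumes "\<And>k. orthonormal_pair (Xl k) (Xr k)"
    and "cmod c = 1" "\<And>k. cmod (\<alpha> k) = 1" "\<And>k. cmod (\<beta> k) = 1"
    and "\<And>m. cnj (c * \<alpha> (m - 1)) *s vec2 (\<alpha> m * cinner (Xl m) (Zl m)) (\<beta> m * cinner (Xr m) (Zl m))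
      = Zl' m"
    and "\<And>m. cnj (c * \<beta> (m + 1)) *s vec2 (\<alpha> m * cinner (Xl m) (Zr m)) (\<beta> m * cinner (Xr m) (Zr m))
      = Zr' m"
  shows "unit_equiv (walk_of Xl Xr Zl Zr) (walk_of (\<lambda>_. e1) (\<lambda>_. e2) Zl' Zr')"
proof -
  define W where "W k = frame_map (\<alpha> k) (\<beta> k) (Xl k) (Xr k)" for k
  have "cinner (Xl k) (Xl k) = 1" "cinner (Xr k) (Xl k) = 0"
    "cinner (Xl k) (Xr k) = 0" "cinner (Xr k) (Xr k) = 1" for k
    using assms(1)[of k] cinner_commute[of "Xl k" "Xr k"] unfolding orthonormal_pair_def by auto
  then have scaled: "c *s (W k *v Xl k) = (c * \<alpha> k) *s e1"
    "c *s (W k *v Xr k) = (c * \<beta> k) *s e2" for k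
    by (simp_all add: W_def frame_map_mult_vec vector_scalar_mult_vec2 e1_e2_vec2)
  have "csmult (cis (Arg c)) (W n ** walk_of Xl Xr Zl Zr n m ** cadj (W m))
      = walk_of (\<lambda>_. e1) (\<lambda>_. e2) Zl' Zr' n m" for n m
    unfolding walk_of_conj cis_Arg_unimodular[OF assms(2)] scaled unfolding walk_of_scale
    unfolding W_def frame_map_mult_vec assms(5,6) ..
  moreover have "unitary2 (W k)" for k
    unfolding W_def using assms(1,3,4) by (rule frame_map_unitary)
  ultimately show ?thesis unfolding unit_equiv_def by blast
qed

lemma unit_equiv_walk_of_gauge:
  fixes r s :: "int \<Rightarrow> real"
  assumes "\<And>k. orthonormal_pair (Xl k) (Xr k)"
    and units: "cmod c = 1" "cmod w = 1" "\<And>k. cmod (u k) = 1" "\<And>k. cmod (v k) = 1"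
      "\<And>k. cmod (d k) = 1"
    and coin: "\<And>k. cinner (Xl k) (Zl k) = u k * r k" "\<And>k. cinner (Xr k) (Zl k) = v k * s k"
      "\<And>k. cinner (Xl k) (Zr k) = - d k * cnj (v k * s k)"
      "\<And>k. cinner (Xr k) (Zr k) = d k * cnj (u k * r k)"
    and targets: "\<And>k. Zl' k = vec2 (r k) (cnj w * v k * s k)"
      "\<And>k. Zr' k = vec2 (- (cnj (c * c) * d k * w * cnj (v k)) * s k) (cnj (c * c) * d k * r k)"
  shows "unit_equiv (walk_of Xl Xr Zl Zr) (walk_of (\<lambda>_. e1) (\<lambda>_. e2) Zl' Zr')"
proof -
  have "cmod (c * cnj (u k)) = 1" for k using units by (simp add: norm_mult)
  then obtain \<alpha> where \<alpha>: "\<And>k. cmod (\<alpha> k) = 1" "\<And>k. \<alpha> k = c * cnj (u k) * \<alpha> (k - 1)"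
    using exists_sequence_with_ratios[of "\<lambda>k. c * cnj (u k)"] by blast
  define \<beta> where "\<beta> k = c * cnj w * \<alpha> (k - 1)" for k
  show ?thesis
  proof (rule unit_equiv_walk_of_frame_maps[where c = c and \<alpha> = \<alpha> and \<beta> = \<beta>])
    fix m
    have "\<beta> (m + 1) = c * cnj w * \<alpha> m" by (simp add: \<beta>_def)
    note ids = gauge_site_identities[OF units(1,3,2,4,5) \<alpha>(1) \<alpha>(2) \<beta>_def this]
    show "cnj (c * \<alpha> (m - 1)) *s vec2 (\<alpha> m * cinner (Xl m) (Zl m)) (\<beta> m * cinner (Xr m) (Zl m))
      = Zl' m"
      "cnj (c * \<beta> (m + 1)) *s vec2 (\<alpha> m * cinner (Xl m) (Zr m)) (\<beta> m * cinner (Xr m) (Zr m))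
      = Zr' m"
      unfolding coin vector_scalar_mult_vec2 ids targets by (rule refl)+
    show "cmod (\<beta> m) = 1" using units(1,2) \<alpha>(1) by (simp add: \<beta>_def norm_mult)
  qed (use assms(1) units(1) \<alpha>(1) in auto)
qed

lemma two_phase_walk_unit_equiv_Uwalk:
  assumes "orthonormal_pair x1p x2p" "orthonormal_pair z1p z2p"
    and "orthonormal_pair x1m x2m" "orthonormal_pair z1m z2m"
  shows "\<exists>rp rm \<sigma>1 \<sigma>2. 0 \<le> rp \<and> rp \<le> 1 \<and> 0 \<le> rm \<and> rm \<le> 1 \<and>
    unit_equiv (walk_of (two_phase x1p x1m) (two_phase x2p x2m) (two_phase z1p z1m) (two_phase z2p z2m))
      (Uwalk rp rm \<sigma>1 \<sigma>2)"
proof -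
  obtain up vp dp rp where p: "cmod up = 1" "cmod vp = 1" "cmod dp = 1" "0 \<le> rp" "rp \<le> 1"
    "cinner x1p z1p = up * of_real rp" "cinner x2p z1p = vp * of_real (sqrt (1 - rp\<^sup>2))"
    "cinner x1p z2p = - dp * cnj (vp * of_real (sqrt (1 - rp\<^sup>2)))"
    "cinner x2p z2p = dp * cnj (up * of_real rp)"
    using orthonormal_pair_coin_polar[OF assms(1,2)] .
  obtain um vm dm rm where m: "cmod um = 1" "cmod vm = 1" "cmod dm = 1" "0 \<le> rm" "rm \<le> 1"
    "cinner x1m z1m = um * of_real rm" "cinner x2m z1m = vm * of_real (sqrt (1 - rm\<^sup>2))"
    "cinner x1m z2m = - dm * cnj (vm * of_real (sqrt (1 - rm\<^sup>2)))"
    "cinner x2m z2m = dm * cnj (um * of_real rm)"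
    using orthonormal_pair_coin_polar[OF assms(3,4)] .
  define c where "c = csqrt (dm * vp * cnj vm)"
  have c: "cmod c = 1" "c * c = dm * vp * cnj vm"
    using p m by (simp_all add: c_def norm_mult flip: power2_eq_square)
  then have cc: "cnj c * cnj c = cnj dm * cnj vp * vm"
    by (metis complex_cnj_mult complex_cnj_cnj)
  have units: "cnj vp * vp = 1" "cnj vm * vm = 1" "cnj dm * dm = 1"
    using p m by (simp_all add: cnj_mult_self_eq_1_iff)
  have cis: "cis (Arg (cnj dm * cnj vp * vm * dp)) = cnj dm * cnj vp * vm * dp"
    "cis (Arg (cnj vp * vm)) = cnj vp * vm"
    using c p m by (simp_all add: cis_Arg_unimodular norm_mult)
  have "unit_equiv (walk_of (two_phase x1p x1m) (two_phase x2p x2m) (two_phase z1p z1m)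
      (two_phase z2p z2m)) (Uwalk rp rm (Arg (cnj dm * cnj vp * vm * dp)) (Arg (cnj vp * vm)))"
    unfolding Uwalk_walk_of
  proof (rule unit_equiv_walk_of_gauge[where c = c and w = vp and u = "two_phase up um"
        and v = "two_phase vp vm" and d = "two_phase dp dm" and r = "two_phase rp rm"
        and s = "two_phase (sqrt (1 - rp\<^sup>2)) (sqrt (1 - rm\<^sup>2))"])
    fix k
    show "two_phase (vec2 (of_real rp) (of_real (sqrt (1 - rp\<^sup>2))))
        (vec2 (of_real rm) (cis (Arg (cnj vp * vm)) * of_real (sqrt (1 - rm\<^sup>2)))) k
      = vec2 (of_real (two_phase rp rm k)) (cnj vp * two_phase vp vm k *
          of_real (two_phase (sqrt (1 - rp\<^sup>2)) (sqrt (1 - rm\<^sup>2)) k))"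
      "two_phase (vec2 (- cis (Arg (cnj dm * cnj vp * vm * dp)) * of_real (sqrt (1 - rp\<^sup>2)))
          (cis (Arg (cnj dm * cnj vp * vm * dp)) * of_real rp))
        (vec2 (- of_real (sqrt (1 - rm\<^sup>2))) (cis (Arg (cnj vp * vm)) * of_real rm)) k
      = vec2 (- (cnj (c * c) * two_phase dp dm k * vp * cnj (two_phase vp vm k)) *
          of_real (two_phase (sqrt (1 - rp\<^sup>2)) (sqrt (1 - rm\<^sup>2)) k))
          (cnj (c * c) * two_phase dp dm k * of_real (two_phase rp rm k))"
      using cc units by (cases "0 \<le> k"; simp add: two_phase_def cis; (intro disjI2)?; algebra)+
  qed (use assms p m c in \<open>simp_all add: two_phase_def\<close>)
  then show ?thesis using p(4,5) m(4,5) by blast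
qed

section \<open>Uniqueness of the parameters\<close>

lemma walk_of_e1_e2_conj_diagonal:
  assumes walks: "walk_of (\<lambda>k. c *s (W k *v e1)) (\<lambda>k. c *s (W k *v e2)) (\<lambda>k. W k *v Zl k)
      (\<lambda>k. W k *v Zr k) = walk_of (\<lambda>_. e1) (\<lambda>_. e2) Zl' Zr'"
    and "c \<noteq> 0" and nonzero: "\<And>m. Zl' m \<noteq> 0" "\<And>m. Zr' m \<noteq> 0"
  shows "W k $ 1 $ 2 = 0" "W k $ 2 $ 1 = 0"
proof -
  have lower: "ketbra (c *s (W (m - 1) *v e1)) (W m *v Zl m) = ketbra e1 (Zl' m)"
    and upper: "ketbra (c *s (W (m + 1) *v e2)) (W m *v Zr m) = ketbra e2 (Zr' m)" for m
    using fun_cong[OF fun_cong[OF walks, of "m - 1"], of m]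
      fun_cong[OF fun_cong[OF walks, of "m + 1"], of m] by (simp_all add: walk_of_def)
  have "(c *s (W k *v e1)) $ 2 = 0" "(c *s (W k *v e2)) $ 1 = 0"
    using ketbra_eq_ketbra_e1[OF lower[of "k + 1"] nonzero(1)]
      ketbra_eq_ketbra_e2[OF upper[of "k - 1"] nonzero(2)] by simp_all
  with \<open>c \<noteq> 0\<close> show "W k $ 1 $ 2 = 0" "W k $ 2 $ 1 = 0"
    by (simp_all add: matrix_vector_mult_nth2 e1_e2_vec2)
qed

lemma unit_equiv_standard_walk_diagonal:
  assumes "unit_equiv (walk_of (\<lambda>_. e1) (\<lambda>_. e2) Zl Zr) (walk_of (\<lambda>_. e1) (\<lambda>_. e2) Zl' Zr')"
    and nonzero: "\<And>m. Zl' m \<noteq> 0" "\<And>m. Zr' m \<noteq> 0"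
  obtains c a b where "cmod c = 1" "\<And>k. cmod (a k) = 1" "\<And>k. cmod (b k) = 1"
    "\<And>m. Zl' m = cnj (c * a (m - 1)) *s vec2 (a m * Zl m $ 1) (b m * Zl m $ 2)"
    "\<And>m. Zr' m = cnj (c * b (m + 1)) *s vec2 (a m * Zr m $ 1) (b m * Zr m $ 2)"
proof -
  obtain lam W where unitary: "\<And>n. unitary2 (W n)" and conj: "\<And>n m.
      csmult (cis lam) (W n ** walk_of (\<lambda>_. e1) (\<lambda>_. e2) Zl Zr n m ** cadj (W m))
      = walk_of (\<lambda>_. e1) (\<lambda>_. e2) Zl' Zr' n m"
    using assms(1) unfolding unit_equiv_def by blast
  define c where "c = cis lam"
  have walks: "walk_of (\<lambda>k. c *s (W k *v e1)) (\<lambda>k. c *s (W k *v e2)) (\<lambda>k. W k *v Zl k)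
      (\<lambda>k. W k *v Zr k) = walk_of (\<lambda>_. e1) (\<lambda>_. e2) Zl' Zr'"
    using conj unfolding walk_of_conj c_def by (simp add: fun_eq_iff)
  have "c \<noteq> 0" by (simp add: c_def)
  note off = walk_of_e1_e2_conj_diagonal[OF walks this nonzero]
  define a where "a k = W k $ 1 $ 1" for k
  define b where "b k = W k $ 2 $ 2" for k
  have diagonal: "W k *v v = vec2 (a k * v $ 1) (b k * v $ 2)" "cmod (a k) = 1" "cmod (b k) = 1"
    for k v unfolding a_def b_def using unitary2_diagonal[OF unitary off] by blast+
  have scaled: "c *s (W k *v e1) = (c * a k) *s e1" "c *s (W k *v e2) = (c * b k) *s e2" for k
    by (simp_all add: diagonal e1_e2_vec2 vector_scalar_mult_vec2)
  have "walk_of (\<lambda>_. e1) (\<lambda>_. e2)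
      (\<lambda>m. cnj (c * a (m - 1)) *s vec2 (a m * Zl m $ 1) (b m * Zl m $ 2))
      (\<lambda>m. cnj (c * b (m + 1)) *s vec2 (a m * Zr m $ 1) (b m * Zr m $ 2))
    = walk_of (\<lambda>_. e1) (\<lambda>_. e2) Zl' Zr'"
    using walks[unfolded scaled, unfolded walk_of_scale diagonal(1)] .
  then have eqs: "(\<lambda>m. cnj (c * a (m - 1)) *s vec2 (a m * Zl m $ 1) (b m * Zl m $ 2)) = Zl'"
    "(\<lambda>m. cnj (c * b (m + 1)) *s vec2 (a m * Zr m $ 1) (b m * Zr m $ 2)) = Zr'"
    by (simp_all only: walk_of_e1_e2_eq_iff)
  show ?thesis
  proof (rule that)
    show "cmod c = 1" by (simp add: c_def)
  qed (simp_all add: diagonal flip: eqs)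
qed

lemma diagonal_gauge_parameters_eq:
  fixes c :: complex and a b :: "int \<Rightarrow> complex"
    and rp sp rm sm rp' sp' rm' sm' \<sigma>1 \<sigma>2 \<sigma>1' \<sigma>2' :: real
  assumes units: "cmod c = 1" "\<And>k. cmod (a k) = 1" "\<And>k. cmod (b k) = 1"
    and pos: "0 < rp" "0 < sp" "0 < rm" "0 < sm" "0 < rp'" "0 < sp'" "0 < rm'" "0 < sm'"
    and entries:
    "of_real rp' = cnj (c * a (-1)) * (a 0 * of_real rp)"
    "of_real sp' = cnj (c * a (-1)) * (b 0 * of_real sp)"
    "of_real sp' = cnj (c * a 0) * (b 1 * of_real sp)"
    "- cis \<sigma>1' * of_real sp' = cnj (c * b 1) * (a 0 * (- cis \<sigma>1 * of_real sp))"
    "of_real rm' = cnj (c * a (-2)) * (a (-1) * of_real rm)"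
    "cis \<sigma>2' * of_real sm' = cnj (c * a (-2)) * (b (-1) * (cis \<sigma>2 * of_real sm))"
    "of_real sm' = cnj (c * b 0) * (a (-1) * of_real sm)"
    "of_real sm' = cnj (c * b (-1)) * (a (-2) * of_real sm)"
  shows "rp = rp' \<and> rm = rm' \<and> cis \<sigma>1 = cis \<sigma>1' \<and> cis \<sigma>2 = cis \<sigma>2'"
proof -
  have cu: "cmod (c * x) = 1" if "cmod x = 1" for x using units(1) that by (simp add: norm_mult)
  note scaling = unit_scaling_of_pos_real[OF cu units(2)] unit_scaling_of_pos_real[OF cu units(3)]
    unit_scaling_of_pos_real[OF cu[OF units(3)] units(2)]
  have phases: "rp = rp'" "sp = sp'" "b 0 = c * a (-1)" "b 1 = c * a 0"
    "rm = rm'" "sm = sm'" "a (-1) = c * b 0" "a (-2) = c * b (-1)"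
    using scaling(1)[OF units(2) entries(1)] scaling(2)[OF units(2) entries(2)]
      scaling(2)[OF units(2) entries(3)] scaling(1)[OF units(2) entries(5)]
      scaling(3)[OF entries(7)] scaling(3)[OF entries(8)] pos by auto
  have "a (-1) = (c * c) * a (-1)" using phases(3,7) by (simp add: mult.assoc)
  then have "c * c = 1" using units(2)[of "-1"] by auto
  then have "cnj c * cnj c = 1" by (metis complex_cnj_mult complex_cnj_one)
  moreover have "cnj (a 0) * a 0 = 1" "cnj (b (-1)) * b (-1) = 1"
    using units by (simp_all add: cnj_mult_self_eq_1_iff)
  ultimately have "cis \<sigma>1' * of_real sp = cis \<sigma>1 * of_real sp"
    "cis \<sigma>2' * of_real sm = cis \<sigma>2 * of_real sm"
    using entries(4,6) unfolding phases(4,8) phases(2,6)[symmetric] complex_cnj_mult by algebra+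
  then show ?thesis using phases(1,5) pos(2,4) by simp
qed

lemma Uwalk_unit_equiv_imp_parameters:
  fixes rp rm \<sigma>1 \<sigma>2 rp' rm' \<sigma>1' \<sigma>2' :: real
  assumes r: "0 < rp" "rp < 1" "0 < rm" "rm < 1" "0 < rp'" "rp' < 1" "0 < rm'" "rm' < 1"
    and "unit_equiv (Uwalk rp rm \<sigma>1 \<sigma>2) (Uwalk rp' rm' \<sigma>1' \<sigma>2')"
  shows "rp = rp' \<and> rm = rm' \<and> cis \<sigma>1 = cis \<sigma>1' \<and> cis \<sigma>2 = cis \<sigma>2'"
proof -
  define s where "s r = sqrt (1 - r\<^sup>2)" for r :: real
  have s_pos: "0 < s x" if "0 < x" "x < 1" for x
    using that by (simp add: s_def power_less_one_iff)
  define Zl where "Zl r r' \<sigma>' = two_phase (vec2 (of_real r) (of_real (s r)))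
    (vec2 (of_real r') (cis \<sigma>' * of_real (s r')))" for r r' \<sigma>' :: real
  define Zr where "Zr r r' \<sigma> \<sigma>' = two_phase (vec2 (- cis \<sigma> * of_real (s r)) (cis \<sigma> * of_real r))
    (vec2 (- of_real (s r')) (cis \<sigma>' * of_real r'))" for r r' \<sigma> \<sigma>' :: real
  have walks: "Uwalk r r' \<sigma> \<sigma>' = walk_of (\<lambda>_. e1) (\<lambda>_. e2) (Zl r r' \<sigma>') (Zr r r' \<sigma> \<sigma>')"
    for r r' \<sigma> \<sigma>' unfolding Zl_def Zr_def s_def by (rule Uwalk_walk_of)
  have "Zl rp' rm' \<sigma>2' m \<noteq> 0" "Zr rp' rm' \<sigma>1' \<sigma>2' m \<noteq> 0" for m
    using r by (simp_all add: Zl_def Zr_def two_phase_def vec2_eq_0_iff)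
  then obtain c a b where units: "cmod c = 1" "\<And>k. cmod (a k) = 1" "\<And>k. cmod (b k) = 1"
    and lower: "\<And>m. Zl rp' rm' \<sigma>2' m
      = cnj (c * a (m - 1)) *s vec2 (a m * Zl rp rm \<sigma>2 m $ 1) (b m * Zl rp rm \<sigma>2 m $ 2)"
    and upper: "\<And>m. Zr rp' rm' \<sigma>1' \<sigma>2' m
      = cnj (c * b (m + 1)) *s vec2 (a m * Zr rp rm \<sigma>1 \<sigma>2 m $ 1) (b m * Zr rp rm \<sigma>1 \<sigma>2 m $ 2)"
    using unit_equiv_standard_walk_diagonal[OF assms(9)[unfolded walks]] by metis
  have entries:
    "of_real rp' = cnj (c * a (-1)) * (a 0 * of_real rp)"
    "of_real (s rp') = cnj (c * a (-1)) * (b 0 * of_real (s rp))"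
    "of_real (s rp') = cnj (c * a 0) * (b 1 * of_real (s rp))"
    "- cis \<sigma>1' * of_real (s rp') = cnj (c * b 1) * (a 0 * (- cis \<sigma>1 * of_real (s rp)))"
    "of_real rm' = cnj (c * a (-2)) * (a (-1) * of_real rm)"
    "cis \<sigma>2' * of_real (s rm') = cnj (c * a (-2)) * (b (-1) * (cis \<sigma>2 * of_real (s rm)))"
    "of_real (s rm') = cnj (c * b 0) * (a (-1) * of_real (s rm))"
    "of_real (s rm') = cnj (c * b (-1)) * (a (-2) * of_real (s rm))"
    using lower[of 0] lower[of 1] lower[of "-1"] upper[of 0] upper[of "-1"] upper[of "-2"]
    by (simp_all add: Zl_def Zr_def two_phase_def vector_scalar_mult_vec2)
  show ?thesis
    by (rule diagonal_gauge_parameters_eq[OF units r(1) s_pos[OF r(1,2)] r(3) s_pos[OF r(3,4)]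
          r(5) s_pos[OF r(5,6)] r(7) s_pos[OF r(7,8)] entries])
qed

theorem theorem2p12:
  shows "(\<forall>U. complete_two_phase U \<longrightarrow>
            (\<exists>rp rm \<sigma>1 \<sigma>2. 0 \<le> rp \<and> rp \<le> 1 \<and> 0 \<le> rm \<and> rm \<le> 1 \<and>
                unit_equiv U (Uwalk rp rm \<sigma>1 \<sigma>2)))
       \<and> (\<forall>rp rm \<sigma>1 \<sigma>2 rp' rm' \<sigma>1' \<sigma>2'.
            0 < rp \<and> rp < 1 \<and> 0 < rm \<and> rm < 1 \<and> 0 < rp' \<and> rp' < 1 \<and> 0 < rm' \<and> rm' < 1 \<and>
            \<sigma>1 \<in> {0..<2*pi} \<and> \<sigma>2 \<in> {0..<2*pi} \<and> \<sigma>1' \<in> {0..<2*pi} \<and> \<sigma>2' \<in> {0..<2*pi} \<longrightarrow>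
            (unit_equiv (Uwalk rp rm \<sigma>1 \<sigma>2) (Uwalk rp' rm' \<sigma>1' \<sigma>2') \<longleftrightarrow>
             rp = rp' \<and> rm = rm' \<and> \<sigma>1 = \<sigma>1' \<and> \<sigma>2 = \<sigma>2'))"
proof (intro conjI allI impI)
  fix U assume "complete_two_phase U"
  then obtain x1p x2p z1p z2p x1m x2m z1m z2m where
    "orthonormal_pair x1p x2p" "orthonormal_pair z1p z2p"
    "orthonormal_pair x1m x2m" "orthonormal_pair z1m z2m"
    "U = walk_of (two_phase x1p x1m) (two_phase x2p x2m) (two_phase z1p z1m) (two_phase z2p z2m)"
    by (rule complete_two_phase_walk_of)
  then show "\<exists>rp rm \<sigma>1 \<sigma>2. 0 \<le> rp \<and> rp \<le> 1 \<and> 0 \<le> rm \<and> rm \<le> 1 \<and> unit_equiv U (Uwalk rp rm \<sigma>1 \<sigma>2)"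
    using two_phase_walk_unit_equiv_Uwalk by simp
next
  fix rp rm \<sigma>1 \<sigma>2 rp' rm' \<sigma>1' \<sigma>2' :: real
  assume "0 < rp \<and> rp < 1 \<and> 0 < rm \<and> rm < 1 \<and> 0 < rp' \<and> rp' < 1 \<and> 0 < rm' \<and> rm' < 1 \<and>
    \<sigma>1 \<in> {0..<2*pi} \<and> \<sigma>2 \<in> {0..<2*pi} \<and> \<sigma>1' \<in> {0..<2*pi} \<and> \<sigma>2' \<in> {0..<2*pi}"
  then show "unit_equiv (Uwalk rp rm \<sigma>1 \<sigma>2) (Uwalk rp' rm' \<sigma>1' \<sigma>2') \<longleftrightarrow>
      rp = rp' \<and> rm = rm' \<and> \<sigma>1 = \<sigma>1' \<and> \<sigma>2 = \<sigma>2'"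
    using Uwalk_unit_equiv_imp_parameters[of rp rm rp' rm' \<sigma>1 \<sigma>2 \<sigma>1' \<sigma>2'] cis_inj_on_period
      unit_equiv_refl by metis
qed


end
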